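(* Let $A\in\mathbb{R}^{M\times M}$ be symmetric positive definite with eigenvalues $0<\phi_1\le\phi_2\le\cdots\le\phi_M$. Let $b,k_{n_1},k_{n_2},k_{n_3}>0$ with $k_{n_2}<k_{n_1}/\sqrt{\phi_M}$, and define $$Q=\mathrm{sym}\left\{\begin{pmatrix}k_{n_1}A+k_{n_3}I&k_{n_2}A&0\\k_{n_2}A&k_{n_1}I&0\\0&0&I\end{pmatrix}\begin{pmatrix}0&I&0\\-A&-bI&bI\\0&0&-A\end{pmatrix}\right\},$$ where $\mathrm{sym}\{X\}=\frac12(X+X^T)$ and $I=I_M$. If moreover $$b<\phi_1,\quad k_{n_1}<\frac{2\phi_1}{b},\quad k_{n_2}<\min\Big\{\frac{bk_{n_1}}{\phi_M(2+b)},\ \frac2b-\frac{k_{n_1}}{\phi_1}\Big\},\quad k_{n_3}<\frac{bk_{n_2}\phi_1}{2},$$ then all $3M$ eigenvalues of $Q$ are negative, and each is bounded above by the maximum of the following negative quantities: $$k_{n_2}\phi_1(b-\phi_1),\qquad k_{n_2}\phi_M\Big(1+\frac b2\Big)-\frac{bk_{n_1}}2,\qquad \phi_1\Big(\frac{bk_{n_2}}2-1\Big)+\frac{bk_{n_1}}2.$$ *)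

theory Defs
  imports "HOL-Analysis.Analysis"
begin

definition mat_eigenvalue :: "real^'n^'n \<Rightarrow> real \<Rightarrow> bool" where
  "mat_eigenvalue X l \<longleftrightarrow> (\<exists>v. v \<noteq> 0 \<and> X *v v = l *\<^sub>R v)"

definition msym :: "real^'n^'n \<Rightarrow> real^'n^'n" where
  "msym X = (1/2) *\<^sub>R (X + transpose X)"

text \<open>3x3 block matrix with M x M blocks; the index type 'm + 'm + 'm
  lists the three block rows/columns in order (Inl, Inr o Inl, Inr o Inr).\<close>
definition block3 ::
  "real^'m^'m \<Rightarrow> real^'m^'m \<Rightarrow> real^'m^'m \<Rightarrow>
   real^'m^'m \<Rightarrow> real^'m^'m \<Rightarrow> real^'m^'m \<Rightarrow>
   real^'m^'m \<Rightarrow> real^'m^'m \<Rightarrow> real^'m^'m \<Rightarrow>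
   real^('m + 'm + 'm)^('m + 'm + 'm)" where
  "block3 B11 B12 B13 B21 B22 B23 B31 B32 B33 =
    (\<chi> i j. (case i of
        Inl i' \<Rightarrow> (case j of Inl j' \<Rightarrow> B11$i'$j' | Inr (Inl j') \<Rightarrow> B12$i'$j' | Inr (Inr j') \<Rightarrow> B13$i'$j')
      | Inr (Inl i') \<Rightarrow> (case j of Inl j' \<Rightarrow> B21$i'$j' | Inr (Inl j') \<Rightarrow> B22$i'$j' | Inr (Inr j') \<Rightarrow> B23$i'$j')
      | Inr (Inr i') \<Rightarrow> (case j of Inl j' \<Rightarrow> B31$i'$j' | Inr (Inl j') \<Rightarrow> B32$i'$j' | Inr (Inr j') \<Rightarrow> B33$i'$j')))"

end

theory Submission
  imports Defs
begin

text \<open>Split a vector of the block space as \<open>(x, y, z)\<close>. The quadratic form of \<open>Q\<close> is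
  \<open>-kn2 |Ax|\<^sup>2 - b kn2 x\<cdot>Ay + kn3 x\<cdot>y + b kn2 x\<cdot>Az + kn2 y\<cdot>Ay - b kn1 |y|\<^sup>2 + b kn1 y\<cdot>z - z\<cdot>Az\<close>.
  The three cross terms are absorbed by Young's inequality for the positive semidefinite forms
  \<open>b kn2 A - kn3 I\<close>, \<open>b kn2 A\<close> and \<open>b kn1 I\<close>; the diagonal terms that remain are bounded with the
  Rayleigh bounds \<open>phi1 |w|\<^sup>2 \<le> w\<cdot>Aw \<le> phiM |w|\<^sup>2\<close>, and \<open>|Ax|\<^sup>2 - b x\<cdot>Ax \<ge> phi1 (phi1 - b) |x|\<^sup>2\<close>.
  Hence \<open>v\<cdot>Qv \<le> m |v|\<^sup>2\<close> for the maximum \<open>m\<close> of the three bounds, and every eigenvalue of \<open>Q\<close>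
  is at most \<open>m\<close>.\<close>

lemma nonneg_quadratic_linear_coeff_eq_0:
  fixes c d :: real
  assumes "\<And>t. 0 \<le> t * c + t\<^sup>2 * d"
  shows "c = 0"
proof (rule ccontr)
  assume "c \<noteq> 0"
  define t where "t = - c / (\<bar>d\<bar> + 1)"
  have "t \<noteq> 0" using \<open>c \<noteq> 0\<close> by (simp add: t_def)
  have "t * (\<bar>d\<bar> + 1) = - c" by (simp add: t_def)
  have "t * c + t\<^sup>2 * d \<le> t * c + t * (t * (\<bar>d\<bar> + 1)) - t\<^sup>2"
    using mult_left_mono[OF abs_ge_self[of d] zero_le_power2[of t]]
    by (simp add: power2_eq_square algebra_simps)
  also have "\<dots> = - t\<^sup>2"
    unfolding \<open>t * (\<bar>d\<bar> + 1) = - c\<close> by (simp add: power2_eq_square)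
  also have "\<dots> < 0" using \<open>t \<noteq> 0\<close> by simp
  finally show False using assms[of t] by simp
qed

lemma symmetric_matrix_inner_commute:
  fixes A :: "real^'n^'n"
  assumes "transpose A = A"
  shows "x \<bullet> (A *v y) = y \<bullet> (A *v x)"
  by (metis assms dot_lmul_matrix inner_commute vector_transpose_matrix)

lemma quadratic_form_add_scaleR:
  fixes A :: "real^'n^'n"
  assumes "transpose A = A"
  shows "(x + t *\<^sub>R y) \<bullet> (A *v (x + t *\<^sub>R y))
    = x \<bullet> (A *v x) + t * (2 * (x \<bullet> (A *v y))) + t\<^sup>2 * (y \<bullet> (A *v y))"
  using symmetric_matrix_inner_commute[OF assms, of y x]
  by (simp add: matrix_vector_right_distrib matrix_vector_mult_scaleR inner_add_left
      inner_add_right power2_eq_square algebra_simps)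

lemma symmetric_psd_matrix_vector_eq_0:
  fixes B :: "real^'n^'n"
  assumes symB: "transpose B = B"
    and psd: "\<And>w. 0 \<le> w \<bullet> (B *v w)"
    and "u \<bullet> (B *v u) = 0"
  shows "B *v u = 0"
proof -
  have "0 \<le> t * (2 * (u \<bullet> (B *v (B *v u)))) + t\<^sup>2 * ((B *v u) \<bullet> (B *v (B *v u)))" for t
    using psd[of "u + t *\<^sub>R (B *v u)"] quadratic_form_add_scaleR[OF symB, of u t "B *v u"] assms(3)
    by simp
  then have "u \<bullet> (B *v (B *v u)) = 0"
    using nonneg_quadratic_linear_coeff_eq_0 by fastforce
  then show ?thesis
    by (simp add: symmetric_matrix_inner_commute[OF symB, of u])
qed

lemma symmetric_matrix_min_eigenvalue:
  fixes A :: "real^'n^'n"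
  assumes symA: "transpose A = A"
  obtains \<mu> where "mat_eigenvalue A \<mu>" and "\<And>x. \<mu> * (x \<bullet> x) \<le> x \<bullet> (A *v x)"
proof -
  let ?f = "\<lambda>x. x \<bullet> (A *v x)"
  have "continuous_on (sphere 0 1) ?f"
    by (intro continuous_on_inner continuous_on_id matrix_vector_mult_linear_continuous_on)
  moreover have "sphere (0::real^'n) 1 \<noteq> {}"
    by (metis empty_iff mem_sphere_0 norm_axis_1)
  ultimately obtain u where u: "u \<in> sphere 0 1" and umin: "\<And>x. x \<in> sphere 0 1 \<Longrightarrow> ?f u \<le> ?f x"
    using continuous_attains_inf[OF compact_sphere] by blast
  define \<mu> where "\<mu> = ?f u"
  have bound: "\<mu> * (x \<bullet> x) \<le> ?f x" for x
  proof (cases "x = 0")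
    case False
    then have "\<mu> \<le> ?f ((1 / norm x) *\<^sub>R x)"
      unfolding \<mu>_def by (intro umin) simp
    then show ?thesis
      using False by (simp add: matrix_vector_mult_scaleR dot_square_norm power2_eq_square divide_simps)
  qed simp
  define B where "B = A - \<mu> *\<^sub>R mat 1"
  have Bv: "B *v w = A *v w - \<mu> *\<^sub>R w" for w
    by (simp add: B_def matrix_vector_mult_diff_rdistrib scaleR_matrix_vector_assoc[symmetric])
  have "B *v u = 0"
  proof (rule symmetric_psd_matrix_vector_eq_0)
    show "transpose B = B"
      using symA by (simp add: B_def transpose_def vec_eq_iff mat_def)
    show "0 \<le> w \<bullet> (B *v w)" for w
      using bound[of w] by (simp add: Bv inner_diff_right)
    show "u \<bullet> (B *v u) = 0"
      using u by (simp add: Bv inner_diff_right \<mu>_def dot_square_norm)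
  qed
  then have "A *v u = \<mu> *\<^sub>R u" by (simp add: Bv)
  with u have "mat_eigenvalue A \<mu>"
    unfolding mat_eigenvalue_def by (metis mem_sphere_0 norm_zero zero_neq_one)
  then show thesis using bound by (rule that)
qed

lemma matrix_vector_mult_uminus:
  fixes A :: "real^'n^'m"
  shows "(- A) *v x = - (A *v x)" and "A *v (- x) = - (A *v x)"
  by (metis scaleR_matrix_vector_assoc scaleR_minus1_left, metis matrix_vector_mult_scaleR scaleR_minus1_left)

lemma mat_eigenvalue_uminus: "mat_eigenvalue (- A) l \<longleftrightarrow> mat_eigenvalue A (- l)"
  unfolding mat_eigenvalue_def matrix_vector_mult_uminus
  by (metis minus_minus scaleR_minus_left)

lemma quadratic_form_ge_eigenvalue_lower_bound:
  fixes A :: "real^'n^'n"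
  assumes "transpose A = A" and "\<And>l. mat_eigenvalue A l \<Longrightarrow> c \<le> l"
  shows "c * (x \<bullet> x) \<le> x \<bullet> (A *v x)"
proof -
  obtain \<mu> where "mat_eigenvalue A \<mu>" and "\<mu> * (x \<bullet> x) \<le> x \<bullet> (A *v x)"
    using symmetric_matrix_min_eigenvalue[OF assms(1)] by metis
  moreover have "c * (x \<bullet> x) \<le> \<mu> * (x \<bullet> x)"
    using assms(2) calculation(1) by (simp add: mult_right_mono)
  ultimately show ?thesis by linarith
qed

lemma quadratic_form_le_eigenvalue_upper_bound:
  fixes A :: "real^'n^'n"
  assumes "transpose A = A" and "\<And>l. mat_eigenvalue A l \<Longrightarrow> l \<le> c"
  shows "x \<bullet> (A *v x) \<le> c * (x \<bullet> x)"
proof -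
  have "transpose (- A) = - A"
    using assms(1) by (metis scaleR_minus1_left transpose_scalar)
  moreover have "- c \<le> l" if "mat_eigenvalue (- A) l" for l
    using assms(2) that by (force simp: mat_eigenvalue_uminus)
  ultimately have "- c * (x \<bullet> x) \<le> x \<bullet> (- A *v x)"
    by (rule quadratic_form_ge_eigenvalue_lower_bound)
  then show ?thesis
    by (simp add: matrix_vector_mult_uminus)
qed

lemma mat_eigenvalue_le_quadratic_form_bound:
  assumes "\<And>v. v \<bullet> (X *v v) \<le> m * (v \<bullet> v)" and "mat_eigenvalue X l"
  shows "l \<le> m"
proof -
  obtain v where "v \<noteq> 0" and "X *v v = l *\<^sub>R v"
    using assms(2) unfolding mat_eigenvalue_def by blast
  then have "l * (v \<bullet> v) \<le> m * (v \<bullet> v)" and "v \<bullet> v > 0"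
    using assms(1)[of v] by simp_all
  then show ?thesis by simp
qed

lemma quadratic_form_cross_term_le:
  fixes A :: "real^'n^'n"
  assumes "transpose A = A" and "\<And>w. c * (w \<bullet> w) \<le> w \<bullet> (A *v w)"
  shows "2 * (c * (x \<bullet> y) - x \<bullet> (A *v y))
    \<le> (x \<bullet> (A *v x) - c * (x \<bullet> x)) + (y \<bullet> (A *v y) - c * (y \<bullet> y))"
  using assms(2)[of "x + 1 *\<^sub>R y"] quadratic_form_add_scaleR[OF assms(1), of x 1 y]
  by (simp add: inner_add_left inner_add_right inner_commute algebra_simps)

lemma matrix_vector_inner_self_lower_bound:
  fixes A :: "real^'n^'n"
  assumes "\<And>w. c * (w \<bullet> w) \<le> w \<bullet> (A *v w)" and "b \<le> 2 * c"
  shows "c * (c - b) * (x \<bullet> x) \<le> (A *v x) \<bullet> (A *v x) - b * (x \<bullet> (A *v x))"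
proof -
  define r where "r = A *v x - c *\<^sub>R x"
  have "(A *v x) \<bullet> (A *v x) - b * (x \<bullet> (A *v x)) - c * (c - b) * (x \<bullet> x)
      = r \<bullet> r + (2 * c - b) * (x \<bullet> r)"
    by (simp add: r_def inner_diff_left inner_diff_right inner_commute algebra_simps)
  moreover have "0 \<le> x \<bullet> r"
    using assms(1)[of x] by (simp add: r_def inner_diff_right)
  ultimately show ?thesis
    using assms(2) by (smt (verit) inner_ge_zero mult_nonneg_nonneg)
qed

definition join3 :: "real^'m \<Rightarrow> real^'m \<Rightarrow> real^'m \<Rightarrow> real^('m + 'm + 'm)" where
  "join3 x y z = (\<chi> i. case i of Inl a \<Rightarrow> x$a | Inr (Inl a) \<Rightarrow> y$a | Inr (Inr a) \<Rightarrow> z$a)"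

lemma join3_cases:
  obtains x y z where "v = join3 x y z"
proof
  show "v = join3 (\<chi> a. v$Inl a) (\<chi> a. v$Inr (Inl a)) (\<chi> a. v$Inr (Inr a))"
    by (auto simp: join3_def vec_eq_iff split: sum.split)
qed

lemma sum_UNIV_sum_type:
  fixes f :: "'a::finite + 'b::finite \<Rightarrow> 'c::comm_monoid_add"
  shows "(\<Sum>i\<in>UNIV. f i) = (\<Sum>a\<in>UNIV. f (Inl a)) + (\<Sum>b\<in>UNIV. f (Inr b))"
  by (subst UNIV_Plus_UNIV[symmetric], subst sum.Plus) (simp_all add: o_def)

lemma inner_join3: "join3 x y z \<bullet> join3 x' y' z' = x \<bullet> x' + y \<bullet> y' + z \<bullet> z'"
  by (simp add: inner_vec_def sum_UNIV_sum_type join3_def)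

lemma block3_mult_join3:
  "block3 B11 B12 B13 B21 B22 B23 B31 B32 B33 *v join3 x y z =
   join3 (B11 *v x + B12 *v y + B13 *v z) (B21 *v x + B22 *v y + B23 *v z)
     (B31 *v x + B32 *v y + B33 *v z)"
  by (simp add: vec_eq_iff matrix_vector_mult_def block3_def join3_def sum_UNIV_sum_type
      split: sum.split)

lemma inner_msym: "v \<bullet> (msym X *v v) = v \<bullet> (X *v v)"
proof -
  have "v \<bullet> (transpose X *v v) = v \<bullet> (X *v v)"
    by (metis dot_lmul_matrix inner_commute transpose_matrix_vector)
  then show ?thesis
    by (simp add: msym_def scaleR_matrix_vector_assoc[symmetric] matrix_vector_mult_add_rdistrib
        inner_add_right)
qed

definition Q_matrix ::
    "real^'m^'m \<Rightarrow> real \<Rightarrow> real \<Rightarrow> real \<Rightarrow> real \<Rightarrow> real^('m + 'm + 'm)^('m + 'm + 'm)" where "Q_matrix A b kn1 kn2 kn3 = msym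
      (block3 (kn1 *\<^sub>R A + kn3 *\<^sub>R mat 1) (kn2 *\<^sub>R A) 0
              (kn2 *\<^sub>R A) (kn1 *\<^sub>R mat 1) 0
              0 0 (mat 1)
       ** block3 0 (mat 1) 0
              (- A) (- b *\<^sub>R mat 1) (b *\<^sub>R mat 1)
              0 0 (- A))"

lemma Q_matrix_quadratic_form:
  fixes A :: "real^'m^'m"
  assumes symA: "transpose A = A"
  shows "join3 x y z \<bullet> (Q_matrix A b kn1 kn2 kn3 *v join3 x y z)
    = - kn2 * ((A *v x) \<bullet> (A *v x)) - b * kn2 * (x \<bullet> (A *v y)) + kn3 * (x \<bullet> y)
      + b * kn2 * (x \<bullet> (A *v z)) + kn2 * (y \<bullet> (A *v y)) - b * kn1 * (y \<bullet> y)
      + b * kn1 * (y \<bullet> z) - z \<bullet> (A *v z)"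
proof -
  have "y \<bullet> (A *v x) = x \<bullet> (A *v y)" and "x \<bullet> (A *v (A *v x)) = (A *v x) \<bullet> (A *v x)"
    using symmetric_matrix_inner_commute[OF symA] by (simp_all add: inner_commute)
  then show ?thesis
    unfolding Q_matrix_def inner_msym matrix_vector_mul_assoc[symmetric] block3_mult_join3
    by (simp add: inner_join3 matrix_vector_mult_add_rdistrib matrix_vector_right_distrib
        matrix_vector_mult_scaleR scaleR_matrix_vector_assoc[symmetric] matrix_vector_mult_uminus
        inner_add_right inner_diff_right algebra_simps)
qed

lemma Q_matrix_quadratic_form_le:
  fixes A :: "real^'m^'m"
  assumes symA: "transpose A = A"
    and lower: "\<And>w. phi1 * (w \<bullet> w) \<le> w \<bullet> (A *v w)"
    and upper: "\<And>w. w \<bullet> (A *v w) \<le> phiM * (w \<bullet> w)"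
    and nonneg: "0 \<le> b" "0 \<le> kn1" "0 \<le> kn2" "0 \<le> kn3"
    and b_le: "b \<le> 2 * phi1" and kn3_le: "kn3 \<le> b * kn2 * phi1" and bkn2_le: "b * kn2 \<le> 2"
  shows "join3 x y z \<bullet> (Q_matrix A b kn1 kn2 kn3 *v join3 x y z)
    \<le> kn2 * phi1 * (b - phi1) * (x \<bullet> x)
      + (kn2 * phiM * (1 + b / 2) - b * kn1 / 2) * (y \<bullet> y)
      + (phi1 * (b * kn2 / 2 - 1) + b * kn1 / 2) * (z \<bullet> z)"
proof -
  have sym_bkn2A: "transpose ((b * kn2) *\<^sub>R A) = (b * kn2) *\<^sub>R A"
    by (simp add: symA transpose_scalar)
  have psd_bkn2A: "c * (w \<bullet> w) \<le> w \<bullet> ((b * kn2) *\<^sub>R A *v w)"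
    if "c \<le> b * kn2 * phi1" for c w
  proof -
    have "c * (w \<bullet> w) \<le> b * kn2 * phi1 * (w \<bullet> w)"
      using that by (simp add: mult_right_mono)
    also have "\<dots> \<le> b * kn2 * (w \<bullet> (A *v w))"
      using mult_left_mono[OF lower[of w], of "b * kn2"] nonneg by (simp add: mult.assoc)
    finally show ?thesis by (simp add: scaleR_matrix_vector_assoc[symmetric])
  qed
  have xy: "2 * (kn3 * (x \<bullet> y) - b * kn2 * (x \<bullet> (A *v y)))
      \<le> b * kn2 * (x \<bullet> (A *v x)) - kn3 * (x \<bullet> x) + b * kn2 * (y \<bullet> (A *v y)) - kn3 * (y \<bullet> y)"
    using quadratic_form_cross_term_le[OF sym_bkn2A psd_bkn2A, of kn3 x y] kn3_le
    by (simp add: scaleR_matrix_vector_assoc[symmetric])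
  have xz: "2 * (b * kn2 * (x \<bullet> (A *v z))) \<le> b * kn2 * (x \<bullet> (A *v x)) + b * kn2 * (z \<bullet> (A *v z))"
    using quadratic_form_cross_term_le[OF sym_bkn2A psd_bkn2A, of 0 x "- z"] kn3_le nonneg
    by (simp add: scaleR_matrix_vector_assoc[symmetric] matrix_vector_mult_uminus)
  have yz: "2 * (b * kn1 * (y \<bullet> z)) \<le> b * kn1 * (y \<bullet> y) + b * kn1 * (z \<bullet> z)"
  proof -
    have "2 * (y \<bullet> z) \<le> y \<bullet> y + z \<bullet> z"
      using inner_ge_zero[of "y - z"] by (simp add: inner_diff_left inner_diff_right inner_commute)
    then have "b * kn1 * (2 * (y \<bullet> z)) \<le> b * kn1 * (y \<bullet> y + z \<bullet> z)"
      using nonneg by (simp add: mult_left_mono)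
    then show ?thesis by (simp add: algebra_simps)
  qed
  have xx: "kn2 * (phi1 * (phi1 - b) * (x \<bullet> x))
      \<le> kn2 * ((A *v x) \<bullet> (A *v x) - b * (x \<bullet> (A *v x)))"
    using matrix_vector_inner_self_lower_bound[OF lower b_le] nonneg
    by (simp add: mult_left_mono)
  have yy: "kn2 * (1 + b / 2) * (y \<bullet> (A *v y)) \<le> kn2 * (1 + b / 2) * (phiM * (y \<bullet> y))"
    using upper[of y] nonneg by (simp add: mult_left_mono)
  have zz: "(1 - b * kn2 / 2) * (phi1 * (z \<bullet> z)) \<le> (1 - b * kn2 / 2) * (z \<bullet> (A *v z))"
    using lower[of z] bkn2_le by (simp add: mult_left_mono)
  have "0 \<le> kn3 * (x \<bullet> x)" "0 \<le> kn3 * (y \<bullet> y)"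
    using nonneg by simp_all
  with xy xz yz xx yy zz show ?thesis
    unfolding Q_matrix_quadratic_form[OF symA] by (simp add: algebra_simps)
qed

lemma Q_matrix_eigenvalue_le:
  fixes A :: "real^'m^'m"
  assumes "transpose A = A"
    and "\<And>w. phi1 * (w \<bullet> w) \<le> w \<bullet> (A *v w)"
    and "\<And>w. w \<bullet> (A *v w) \<le> phiM * (w \<bullet> w)"
    and "0 \<le> b" "0 \<le> kn1" "0 \<le> kn2" "0 \<le> kn3"
    and "b \<le> 2 * phi1" and "kn3 \<le> b * kn2 * phi1" and "b * kn2 \<le> 2"
    and "mat_eigenvalue (Q_matrix A b kn1 kn2 kn3) l"
  shows "l \<le> max (kn2 * phi1 * (b - phi1))
                (max (kn2 * phiM * (1 + b / 2) - b * kn1 / 2) (phi1 * (b * kn2 / 2 - 1) + b * kn1 / 2))"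
    (is "l \<le> max ?m1 (max ?m2 ?m3)")
proof (rule mat_eigenvalue_le_quadratic_form_bound[OF _ assms(11)])
  fix v :: "real^('m + 'm + 'm)"
  obtain x y z where v: "v = join3 x y z" by (rule join3_cases)
  have "?m1 * (x \<bullet> x) + ?m2 * (y \<bullet> y) + ?m3 * (z \<bullet> z)
      \<le> max ?m1 (max ?m2 ?m3) * (x \<bullet> x + y \<bullet> y + z \<bullet> z)"
    unfolding distrib_left
    by (intro add_mono mult_right_mono) simp_all
  with Q_matrix_quadratic_form_le[OF assms(1-10)]
  show "v \<bullet> (Q_matrix A b kn1 kn2 kn3 *v v) \<le> max ?m1 (max ?m2 ?m3) * (v \<bullet> v)"
    unfolding v inner_join3 by (rule order_trans)
qed

theorem lemma2:
  fixes A :: "real^'m^'m"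
    and phi1 phiM b kn1 kn2 kn3 :: real
  assumes symA: "transpose A = A"
    and pdA: "\<And>x. x \<noteq> 0 \<Longrightarrow> x \<bullet> (A *v x) > 0"
    and phi1_eig: "mat_eigenvalue A phi1"
    and phiM_eig: "mat_eigenvalue A phiM"
    and phi_bounds: "\<And>l. mat_eigenvalue A l \<Longrightarrow> phi1 \<le> l \<and> l \<le> phiM"
    and pos: "b > 0" "kn1 > 0" "kn2 > 0" "kn3 > 0"
    and kn2_sqrt: "kn2 < kn1 / sqrt phiM"
    and b_lt: "b < phi1"
    and kn1_lt: "kn1 < 2 * phi1 / b"
    and kn2_lt: "kn2 < min (b * kn1 / (phiM * (2 + b))) (2 / b - kn1 / phi1)"
    and kn3_lt: "kn3 < b * kn2 * phi1 / 2"
  defines "Q \<equiv> msym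
      (block3 (kn1 *\<^sub>R A + kn3 *\<^sub>R mat 1) (kn2 *\<^sub>R A) 0
              (kn2 *\<^sub>R A) (kn1 *\<^sub>R mat 1) 0
              0 0 (mat 1)
       ** block3 0 (mat 1) 0
              (- A) (- b *\<^sub>R mat 1) (b *\<^sub>R mat 1)
              0 0 (- A))"
  shows "kn2 * phi1 * (b - phi1) < 0
       \<and> kn2 * phiM * (1 + b / 2) - b * kn1 / 2 < 0
       \<and> phi1 * (b * kn2 / 2 - 1) + b * kn1 / 2 < 0
       \<and> (\<forall>l. mat_eigenvalue Q l \<longrightarrow>
            l < 0 \<and>
            l \<le> max (kn2 * phi1 * (b - phi1))
                   (max (kn2 * phiM * (1 + b / 2) - b * kn1 / 2)
                        (phi1 * (b * kn2 / 2 - 1) + b * kn1 / 2)))"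
proof -
  have "0 < phi1" using pos(1) b_lt by linarith
  moreover have "phi1 \<le> phiM" using phi_bounds[OF phiM_eig] by simp
  ultimately have "0 < phiM" by linarith
  have m1: "kn2 * phi1 * (b - phi1) < 0"
    using pos b_lt \<open>0 < phi1\<close> by (simp add: mult_pos_neg)
  have "kn2 * (phiM * (2 + b)) < b * kn1"
    using kn2_lt \<open>0 < phiM\<close> pos by (simp add: pos_less_divide_eq)
  then have m2: "kn2 * phiM * (1 + b / 2) - b * kn1 / 2 < 0"
    by (simp add: algebra_simps)
  have "kn2 * (b * phi1) < 2 * phi1 - kn1 * b"
    using kn2_lt pos \<open>0 < phi1\<close> by (simp add: less_diff_eq field_simps)
  then have m3: "phi1 * (b * kn2 / 2 - 1) + b * kn1 / 2 < 0"
    by (simp add: algebra_simps)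
  have lower: "phi1 * (w \<bullet> w) \<le> w \<bullet> (A *v w)" for w
    using quadratic_form_ge_eigenvalue_lower_bound[OF symA] phi_bounds by blast
  have upper: "w \<bullet> (A *v w) \<le> phiM * (w \<bullet> w)" for w
    using quadratic_form_le_eigenvalue_upper_bound[OF symA] phi_bounds by blast
  have "0 < b * kn2 * phi1" using pos \<open>0 < phi1\<close> by simp
  then have "kn3 \<le> b * kn2 * phi1" using kn3_lt by linarith
  have "b * kn2 * phi1 < 2 * phi1"
    using \<open>kn2 * (b * phi1) < 2 * phi1 - kn1 * b\<close> mult_pos_pos[OF pos(1,2)]
    by (simp add: algebra_simps)
  then have "b * kn2 \<le> 2" using \<open>0 < phi1\<close> by simp
  have "b \<le> 2 * phi1" using b_lt pos by linarith
  have "Q = Q_matrix A b kn1 kn2 kn3" by (simp add: Q_def Q_matrix_def)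
  then show ?thesis
    using m1 m2 m3 Q_matrix_eigenvalue_le[OF symA lower upper, of b kn1 kn2 kn3] pos
      \<open>b \<le> 2 * phi1\<close> \<open>kn3 \<le> b * kn2 * phi1\<close> \<open>b * kn2 \<le> 2\<close>
    by fastforce
qed

end
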